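(* The elements $\delta_{2n}=\Theta(x\otimes\operatorname{ad}_y^{\,2n}(x))$, $n\ge 0$, form a basis of the subspace of $F(L)$ spanned by classes of $x$-degree $2$ (i.e. containing exactly two letters $x$).
   Context: $A=\mathbb{R}\langle x,y\rangle$; $L\subset A$ is the free Lie algebra on $x,y$; $\operatorname{ad}_y(l)=[y,l]=yl-ly$. $F(L)$ is the quotient of $L\otimes L$ by the span of $a\otimes b-b\otimes a$ and $a\otimes[b,c]-[a,b]\otimes c$ ($a,b,c\in L$), with canonical projection $\Theta:L\otimes L\to F(L)$. $F(L)$ is graded by the number of letters $x$ and $y$. *)

theory Defs
  imports Complex_Main
begin

text \<open>Words over the alphabet {x,y}: True encodes the letter x, False the letter y.
  An element of A = R<x,y> is a coefficient function on words.\<close>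

type_synonym ncpoly = "bool list \<Rightarrow> real"

definition genX :: ncpoly where "genX = (\<lambda>w. if w = [True] then 1 else 0)"
definition genY :: ncpoly where "genY = (\<lambda>w. if w = [False] then 1 else 0)"

definition pmul :: "ncpoly \<Rightarrow> ncpoly \<Rightarrow> ncpoly" where
  "pmul p q = (\<lambda>w. \<Sum>i\<le>length w. p (take i w) * q (drop i w))"

definition brk :: "ncpoly \<Rightarrow> ncpoly \<Rightarrow> ncpoly" where
  "brk a b = (\<lambda>w. pmul a b w - pmul b a w)"

text \<open>The free Lie algebra L: the smallest subspace of A containing x, y and closed under brackets.\<close>
inductive_set lie :: "ncpoly set" where
  lie_X: "genX \<in> lie"
| lie_Y: "genY \<in> lie"
| lie_add: "a \<in> lie \<Longrightarrow> b \<in> lie \<Longrightarrow> (\<lambda>w. a w + b w) \<in> lie"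
| lie_smult: "a \<in> lie \<Longrightarrow> (\<lambda>w. c * a w) \<in> lie"
| lie_brk: "a \<in> lie \<Longrightarrow> b \<in> lie \<Longrightarrow> brk a b \<in> lie"

definition adY :: "ncpoly \<Rightarrow> ncpoly" where "adY l = brk genY l"

text \<open>L \<otimes> L realised inside A \<otimes> A = coefficient functions on pairs of words.\<close>
type_synonym tens = "bool list \<times> bool list \<Rightarrow> real"

definition tensor :: "ncpoly \<Rightarrow> ncpoly \<Rightarrow> tens" where
  "tensor a b = (\<lambda>(u, v). a u * b v)"

inductive_set LL :: "tens set" where
  LL_zero: "(\<lambda>p. 0) \<in> LL"
| LL_tensor: "a \<in> lie \<Longrightarrow> b \<in> lie \<Longrightarrow> tensor a b \<in> LL"
| LL_add: "s \<in> LL \<Longrightarrow> t \<in> LL \<Longrightarrow> (\<lambda>p. s p + t p) \<in> LL"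
| LL_smult: "s \<in> LL \<Longrightarrow> (\<lambda>p. c * s p) \<in> LL"

text \<open>The subspace of relations; F(L) = LL / Rel, and Theta(s) = Theta(t) iff s - t in Rel.\<close>
inductive_set Rel :: "tens set" where
  Rel_zero: "(\<lambda>p. 0) \<in> Rel"
| Rel_sym: "a \<in> lie \<Longrightarrow> b \<in> lie \<Longrightarrow> (\<lambda>p. tensor a b p - tensor b a p) \<in> Rel"
| Rel_inv: "a \<in> lie \<Longrightarrow> b \<in> lie \<Longrightarrow> c \<in> lie \<Longrightarrow>
      (\<lambda>p. tensor a (brk b c) p - tensor (brk a b) c p) \<in> Rel"
| Rel_add: "s \<in> Rel \<Longrightarrow> t \<in> Rel \<Longrightarrow> (\<lambda>p. s p + t p) \<in> Rel"
| Rel_smult: "s \<in> Rel \<Longrightarrow> (\<lambda>p. c * s p) \<in> Rel"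

definition xdeg :: "bool list \<Rightarrow> nat" where "xdeg w = length (filter id w)"

definition LL_xdeg2 :: "tens set" where
  "LL_xdeg2 = {t \<in> LL. \<forall>u v. t (u, v) \<noteq> 0 \<longrightarrow> xdeg u + xdeg v = 2}"

text \<open>Representative of delta_{2n} = Theta(x \<otimes> ad_y^{2n}(x)).\<close>
definition delta :: "nat \<Rightarrow> tens" where
  "delta n = tensor genX ((adY ^^ (2 * n)) genX)"

end

theory Submission
  imports Defs
begin

(* Independence: for a word z, cyc_coeff z f sums the coefficients of f at the cyclic rotations
   of z.  It satisfies cyc_coeff z (a b) = cyc_coeff z (b a), hence also
   cyc_coeff z (a [b, c]) = cyc_coeff z ([a, b] c), so the functional a (x) b |-> cyc_coeff z (a b)
   vanishes on the relations defining F(L).  For z = x x y^(2n) it takes the value 2 on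
   x (x) ad_y^(2n) x and the value 0 on x (x) ad_y^(2m) x for m ~= n.

   Spanning: the components of x-degree 0, 1, 2 of a Lie element lie in the spans of y, of the
   ad_y^m x, and of the ad_y^k [ad_y^i x, ad_y^j x], respectively.  Modulo the relations,
   invariance moves ad_y across the tensor sign, so ad_y^i x (x) ad_y^j x is congruent to
   (-1)^j x (x) ad_y^(i+j) x, which by symmetry vanishes when i + j is odd; moreover
   y (x) [ad_y^i x, ad_y^j x] is congruent to ad_y^(i+1) x (x) ad_y^j x, and
   y (x) [y, r] to [y, y] (x) r = 0. *)

section \<open>Linear spans of real-valued functions\<close>

inductive_set lin_span :: "('a \<Rightarrow> real) set \<Rightarrow> ('a \<Rightarrow> real) set" for G where
  lin_span_zero: "(\<lambda>w. 0) \<in> lin_span G"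
| lin_span_base: "g \<in> G \<Longrightarrow> g \<in> lin_span G"
| lin_span_add: "a \<in> lin_span G \<Longrightarrow> b \<in> lin_span G \<Longrightarrow> (\<lambda>w. a w + b w) \<in> lin_span G"
| lin_span_smult: "a \<in> lin_span G \<Longrightarrow> (\<lambda>w. c * a w) \<in> lin_span G"

definition linear_subspace :: "('a \<Rightarrow> real) set \<Rightarrow> bool" where
  "linear_subspace T \<longleftrightarrow> (\<lambda>w. 0) \<in> T \<and> (\<forall>a\<in>T. \<forall>b\<in>T. (\<lambda>w. a w + b w) \<in> T)
     \<and> (\<forall>c. \<forall>a\<in>T. (\<lambda>w. c * a w) \<in> T)"

definition lin_map :: "(('a \<Rightarrow> real) \<Rightarrow> 'b \<Rightarrow> real) \<Rightarrow> bool" where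
  "lin_map f \<longleftrightarrow> (\<forall>a b. f (\<lambda>w. a w + b w) = (\<lambda>w. f a w + f b w))
     \<and> (\<forall>c a. f (\<lambda>w. c * a w) = (\<lambda>w. c * f a w))"

lemma
  assumes "linear_subspace T"
  shows linear_subspace_zero: "(\<lambda>w. 0) \<in> T"
    and linear_subspace_add: "a \<in> T \<Longrightarrow> b \<in> T \<Longrightarrow> (\<lambda>w. a w + b w) \<in> T"
    and linear_subspace_smult: "a \<in> T \<Longrightarrow> (\<lambda>w. c * a w) \<in> T"
  using assms by (auto simp: linear_subspace_def)

lemma linear_subspace_lin_span: "linear_subspace (lin_span G)"
  by (auto simp: linear_subspace_def intro: lin_span.intros)

lemma lin_span_uminus: "a \<in> lin_span G \<Longrightarrow> (\<lambda>w. - a w) \<in> lin_span G"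
  using lin_span_smult[of a G "-1"] by simp

lemma
  assumes "lin_map f"
  shows lin_map_add: "f (\<lambda>w. a w + b w) = (\<lambda>w. f a w + f b w)"
    and lin_map_smult: "f (\<lambda>w. c * a w) = (\<lambda>w. c * f a w)"
    and lin_map_zero: "f (\<lambda>w. 0) = (\<lambda>w. 0)"
    and lin_map_diff: "f (\<lambda>w. a w - b w) = (\<lambda>w. f a w - f b w)"
proof -
  have add: "\<And>a b. f (\<lambda>w. a w + b w) = (\<lambda>w. f a w + f b w)"
    and smult: "\<And>c a. f (\<lambda>w. c * a w) = (\<lambda>w. c * f a w)"
    using assms by (auto simp: lin_map_def)
  then show "f (\<lambda>w. a w + b w) = (\<lambda>w. f a w + f b w)" "f (\<lambda>w. c * a w) = (\<lambda>w. c * f a w)"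
    by blast+
  show "f (\<lambda>w. 0) = (\<lambda>w. 0)" using smult[of 0 a] by simp
  show "f (\<lambda>w. a w - b w) = (\<lambda>w. f a w - f b w)"
    using add[of a "\<lambda>w. (-1) * b w"] smult[of "-1" b] by simp
qed

lemma lin_map_lin_span:
  assumes "lin_map f" "linear_subspace T" "\<And>g. g \<in> G \<Longrightarrow> f g \<in> T" "a \<in> lin_span G"
  shows "f a \<in> T"
  using assms(4)
  by induction (simp_all add: assms lin_map_zero lin_map_add lin_map_smult
      linear_subspace_zero linear_subspace_add linear_subspace_smult)

lemma bilinear_lin_span:
  assumes "\<And>a. lin_map (f a)" "\<And>b. lin_map (\<lambda>a. f a b)" "linear_subspace T"
    and "\<And>g h. g \<in> G \<Longrightarrow> h \<in> H \<Longrightarrow> f g h \<in> T"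
    and "a \<in> lin_span G" "b \<in> lin_span H"
  shows "f a b \<in> T"
proof -
  have "f g b \<in> T" if "g \<in> G" for g
    by (rule lin_map_lin_span[OF assms(1,3) assms(4)[OF that] assms(6)])
  then show ?thesis by (rule lin_map_lin_span[where f = "\<lambda>a. f a b", OF assms(2,3) _ assms(5)])
qed

lemma lin_span_range_sum:
  fixes g :: "nat \<Rightarrow> 'a \<Rightarrow> real"
  assumes "d \<in> lin_span (range g)"
  shows "\<exists>N c. d = (\<lambda>p. \<Sum>n<N. c n * g n p)"
  using assms
proof induction
  case lin_span_zero
  show ?case by (rule exI[where x = "0::nat"]) simp
next
  case (lin_span_base h)
  then obtain m where "h = g m" by blast
  then have "h = (\<lambda>p. \<Sum>n<Suc m. of_bool (n = m) * g n p)"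
    by (simp add: of_bool_def if_distrib sum.delta cong: if_cong)
  then show ?case by (intro exI)
next
  case (lin_span_add a b)
  then obtain N1 c1 N2 c2 where a: "a = (\<lambda>p. \<Sum>n<N1. c1 n * g n p)"
    and b: "b = (\<lambda>p. \<Sum>n<N2. c2 n * g n p)" by blast
  have pad: "(\<Sum>n<max N1 N2. (if n < N then c n else 0) * g n p) = (\<Sum>n<N. c n * g n p)"
    if "N \<le> max N1 N2" for N c p
    by (rule sum.mono_neutral_cong_right) (use that in auto)
  let ?c = "\<lambda>n. (if n < N1 then c1 n else 0) + (if n < N2 then c2 n else 0)"
  have "(\<lambda>p. a p + b p) = (\<lambda>p. \<Sum>n<max N1 N2. ?c n * g n p)"
    by (simp add: a b distrib_right sum.distrib pad)
  then show ?case by (intro exI)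
next
  case (lin_span_smult a k)
  then obtain N c where "a = (\<lambda>p. \<Sum>n<N. c n * g n p)" by blast
  then have "(\<lambda>p. k * a p) = (\<lambda>p. \<Sum>n<N. (k * c n) * g n p)"
    by (simp add: sum_distrib_left mult.assoc)
  then show ?case by (intro exI)
qed

section \<open>The free associative algebra and the elements ad_y^m x\<close>

definition letter :: "bool \<Rightarrow> ncpoly" where
  "letter b = (\<lambda>w. if w = [b] then 1 else 0)"

lemma genX_eq_letter: "genX = letter True"
  and genY_eq_letter: "genY = letter False"
  by (simp_all add: genX_def genY_def letter_def)

lemma letter_Nil [simp]: "letter b [] = 0"
  by (simp add: letter_def)

lemma pmul_Nil: "pmul a b [] = a [] * b []"
  by (simp add: pmul_def)

lemma pmul_letter_Cons: "pmul (letter b) f (c # v) = (if c = b then f v else 0)"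
proof -
  have "pmul (letter b) f (c # v) = (\<Sum>i\<le>length v. letter b (c # take i v) * f (drop i v))"
    unfolding pmul_def by (simp only: length_Cons sum.atMost_Suc_shift) (simp add: letter_def)
  also have "\<dots> = (\<Sum>i\<le>length v. if i = 0 then (if c = b then f v else 0) else 0)"
    by (rule sum.cong) (auto simp: letter_def)
  finally show ?thesis by simp
qed

lemma pmul_letter_snoc: "pmul f (letter b) (v @ [c]) = (if c = b then f v else 0)"
proof -
  have "pmul f (letter b) (v @ [c]) = (\<Sum>i\<le>length v. f (take i (v @ [c])) * letter b (drop i (v @ [c])))"
    by (simp add: pmul_def letter_def)
  also have "\<dots> = (\<Sum>i\<le>length v. if i = length v then (if c = b then f v else 0) else 0)"
    by (rule sum.cong) (auto simp: letter_def)
  finally show ?thesis by simp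
qed

lemma pmul_assoc: "pmul a (pmul b c) = pmul (pmul a b) c"
proof
  fix w :: "bool list"
  let ?n = "length w"
  let ?g = "\<lambda>i j. a (take i w) * b (take j (drop i w)) * c (drop (i + j) w)"
  have "pmul a (pmul b c) w = (\<Sum>i\<le>?n. \<Sum>j\<le>?n - i. ?g i j)"
    by (simp add: pmul_def sum_distrib_left mult.assoc add.commute)
  also have "\<dots> = (\<Sum>(i, j)\<in>{(i, j). i + j \<le> ?n}. ?g i j)"
  proof -
    have "{(i, j). i + j \<le> ?n} = Sigma {..?n} (\<lambda>i. {..?n - i})" by auto
    then show ?thesis by (simp add: sum.Sigma)
  qed
  also have "\<dots> = (\<Sum>k\<le>?n. \<Sum>i\<le>k. ?g i (k - i))"
    by (rule sum.triangle_reindex_eq)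
  also have "\<dots> = pmul (pmul a b) c w"
    by (auto simp: pmul_def sum_distrib_right drop_take intro!: sum.cong)
  finally show "pmul a (pmul b c) w = pmul (pmul a b) c w" .
qed

lemma lin_map_pmul_left: "lin_map (pmul a)"
  and lin_map_pmul_right: "lin_map (\<lambda>a. pmul a b)"
  by (simp_all add: lin_map_def pmul_def fun_eq_iff algebra_simps sum.distrib sum_distrib_left)

lemma lin_map_brk_left: "lin_map (brk a)"
  and lin_map_brk_right: "lin_map (\<lambda>a. brk a b)"
  by (simp_all add: lin_map_def brk_def fun_eq_iff algebra_simps
      lin_map_add[OF lin_map_pmul_left] lin_map_add[OF lin_map_pmul_right]
      lin_map_smult[OF lin_map_pmul_left] lin_map_smult[OF lin_map_pmul_right])

lemma brk_antisym: "brk b a = (\<lambda>w. - brk a b w)"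
  by (simp add: brk_def)

lemma brk_self: "brk a a = (\<lambda>w. 0)"
  by (simp add: brk_def)

lemma adY_pow_lie: "a \<in> lie \<Longrightarrow> (adY ^^ k) a \<in> lie"
  by (induction k) (auto simp: adY_def intro: lie.intros)

abbreviation adyx :: "nat \<Rightarrow> ncpoly" where
  "adyx m \<equiv> (adY ^^ m) genX"

lemma adyx_Suc: "adyx (Suc m) = brk genY (adyx m)"
  by (simp add: adY_def)

lemma adyx_lie: "adyx m \<in> lie"
  by (rule adY_pow_lie[OF lie_X])

lemma adyx_support:
  assumes "adyx m w \<noteq> 0"
  shows "length w = Suc m \<and> xdeg w = 1"
  using assms
proof (induction m arbitrary: w)
  case 0
  then show ?case by (auto simp: genX_def xdeg_def split: if_splits)
next
  case (Suc m)
  have "pmul genY (adyx m) w \<noteq> 0 \<or> pmul (adyx m) genY w \<noteq> 0"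
    using Suc.prems unfolding adyx_Suc brk_def by auto
  then obtain v where "w = False # v \<or> w = v @ [False]" "adyx m v \<noteq> 0"
  proof
    assume "pmul genY (adyx m) w \<noteq> 0"
    then show ?thesis using that
      by (cases w) (auto simp: genY_eq_letter pmul_Nil pmul_letter_Cons split: if_splits)
  next
    assume "pmul (adyx m) genY w \<noteq> 0"
    then show ?thesis using that
      by (cases w rule: rev_cases) (auto simp: genY_eq_letter pmul_Nil pmul_letter_snoc split: if_splits)
  qed
  with Suc.IH[of v] show ?case by (auto simp: xdeg_def)
qed

lemma adyx_last_coeff: "adyx m (replicate m False @ [True]) = 1"
proof (induction m)
  case (Suc m)
  have "adyx (Suc m) (replicate (Suc m) False @ [True])
      = pmul genY (adyx m) (False # (replicate m False @ [True]))
        - pmul (adyx m) genY ((False # replicate m False) @ [True])"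
    by (simp add: adY_def brk_def)
  with Suc.IH show ?case by (simp only: genY_eq_letter pmul_letter_Cons pmul_letter_snoc) simp
qed (simp add: genX_def)

lemma adyx_first_coeff: "adyx m (True # replicate m False) = (-1) ^ m"
proof (induction m)
  case (Suc m)
  have "adyx (Suc m) (True # replicate (Suc m) False)
      = pmul genY (adyx m) (True # replicate (Suc m) False)
        - pmul (adyx m) genY ((True # replicate m False) @ [False])"
    by (simp add: adY_def brk_def replicate_append_same)
  with Suc.IH show ?case by (simp only: genY_eq_letter pmul_letter_Cons pmul_letter_snoc) simp
qed (simp add: genX_def)

section \<open>A cyclic trace vanishing on the relations\<close>

definition cyc_coeff :: "bool list \<Rightarrow> ncpoly \<Rightarrow> real" where
  "cyc_coeff z f = (\<Sum>k<length z. f (rotate k z))"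

definition cyc_pairing :: "bool list \<Rightarrow> tens \<Rightarrow> real" where
  "cyc_pairing z t = (\<Sum>k<length z. \<Sum>i\<le>length z. t (take i (rotate k z), drop i (rotate k z)))"

lemma cyc_pairing_tensor: "cyc_pairing z (tensor a b) = cyc_coeff z (pmul a b)"
  by (simp add: cyc_pairing_def cyc_coeff_def pmul_def tensor_def)

lemma cyc_coeff_diff: "cyc_coeff z (\<lambda>w. f w - g w) = cyc_coeff z f - cyc_coeff z g"
  by (simp add: cyc_coeff_def sum_subtractf)

lemma cyc_pairing_diff: "cyc_pairing z (\<lambda>p. s p - t p) = cyc_pairing z s - cyc_pairing z t"
  by (simp add: cyc_pairing_def sum_subtractf)

lemma cyc_pairing_add: "cyc_pairing z (\<lambda>p. s p + t p) = cyc_pairing z s + cyc_pairing z t"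
  by (simp add: cyc_pairing_def sum.distrib)

lemma cyc_pairing_smult: "cyc_pairing z (\<lambda>p. c * s p) = c * cyc_pairing z s"
  by (simp add: cyc_pairing_def sum_distrib_left)

lemma cyc_pairing_sum:
  "cyc_pairing z (\<lambda>p. \<Sum>n<N. c n * t n p) = (\<Sum>n<N. c n * cyc_pairing z (t n))"
  by (simp add: cyc_pairing_def sum_distrib_left sum.swap[of _ "{..<N}"])

lemma rotate_split:
  assumes "i \<le> length w"
  shows "take (length w - i) (rotate i w) = drop i w \<and> drop (length w - i) (rotate i w) = take i w"
proof (cases "i = length w")
  case False
  with assms have "rotate i w = drop i w @ take i w" by (simp add: rotate_drop_take)
  with assms show ?thesis by simp
qed simp

lemma cyc_coeff_pmul_commute: "cyc_coeff z (pmul a b) = cyc_coeff z (pmul b a)"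
proof -
  let ?L = "length z"
  let ?S = "{..<?L} \<times> {..?L}"
  let ?g = "\<lambda>a b (k, i). a (take i (rotate k z)) * b (drop i (rotate k z))"
  let ?h = "\<lambda>(k, i). ((k + i) mod ?L, ?L - i)"
  have as_sum: "cyc_coeff z (pmul a b) = sum (?g a b) ?S" for a b
    by (simp add: cyc_coeff_def pmul_def sum.cartesian_product)
  have swap: "?h p \<in> ?S \<and> ?h (?h p) = p \<and> ?g b a (?h p) = ?g a b p" if p_S: "p \<in> ?S" for p
  proof -
    obtain k i where p: "p = (k, i)" and k: "k < ?L" and i: "i \<le> ?L"
      using p_S by (cases p) auto
    have "((k + i) mod ?L + (?L - i)) mod ?L = (k + i + (?L - i)) mod ?L"
      by (rule mod_add_left_eq)
    also have "\<dots> = k" using i k by simp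
    finally have involution: "?h (?h p) = p" using p i by simp
    have "0 < ?L" using k by linarith
    then have maps_to: "?h p \<in> ?S" using p by simp
    have "rotate ((k + i) mod ?L) z = rotate i (rotate k z)"
      by (simp add: rotate_rotate rotate_conv_mod[symmetric] add.commute)
    then have "?g b a (?h p) = ?g a b p"
      using p i rotate_split[of i "rotate k z"] by (simp add: mult.commute)
    with involution maps_to show ?thesis by blast
  qed
  show ?thesis
    unfolding as_sum by (rule sum.reindex_bij_witness[where i = ?h and j = ?h]) (use swap in blast)+
qed

lemma cyc_coeff_pmul_brk: "cyc_coeff z (pmul a (brk b c)) = cyc_coeff z (pmul (brk a b) c)"
proof -
  have "cyc_coeff z (pmul a (pmul c b)) = cyc_coeff z (pmul (pmul b a) c)"
    by (metis pmul_assoc cyc_coeff_pmul_commute)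
  then show ?thesis
    unfolding brk_def lin_map_diff[OF lin_map_pmul_left] lin_map_diff[OF lin_map_pmul_right]
    by (simp add: cyc_coeff_diff pmul_assoc)
qed

lemma cyc_pairing_Rel: "s \<in> Rel \<Longrightarrow> cyc_pairing z s = 0"
proof (induction rule: Rel.induct)
  case (Rel_sym a b)
  then show ?case by (simp add: cyc_pairing_diff cyc_pairing_tensor cyc_coeff_pmul_commute)
next
  case (Rel_inv a b c)
  then show ?case by (simp add: cyc_pairing_diff cyc_pairing_tensor cyc_coeff_pmul_brk)
next
  case (Rel_add s t)
  then show ?case by (simp add: cyc_pairing_add)
next
  case (Rel_smult s c)
  then show ?case by (simp add: cyc_pairing_smult)
qed (simp add: cyc_pairing_def)

lemma cyc_coeff_pmul_genX:
  "cyc_coeff z (pmul genX f) = (\<Sum>k<length z. if z ! k then f (tl (rotate k z)) else 0)"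
proof (cases z)
  case (Cons b v)
  have "pmul genX f (rotate k z) = (if z ! k then f (tl (rotate k z)) else 0)" if "k < length z" for k
  proof -
    have "rotate k z = hd (rotate k z) # tl (rotate k z)"
      using Cons by simp
    moreover have "hd (rotate k z) = z ! k"
      using Cons that by (simp add: hd_rotate_conv_nth)
    ultimately show ?thesis by (metis genX_eq_letter pmul_letter_Cons)
  qed
  then show ?thesis by (simp add: cyc_coeff_def)
qed (simp add: cyc_coeff_def)

(* The only rotations of x x y^(2n) that start with x are x . (x y^(2n)) and x . (y^(2n) x),
   and both words carry coefficient 1 in ad_y^(2n) x. *)
definition xxy_word :: "nat \<Rightarrow> bool list" where
  "xxy_word n = True # True # replicate (2 * n) False"

lemma cyc_pairing_delta: "cyc_pairing (xxy_word n) (delta m) = (if m = n then 2 else 0)"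
proof -
  let ?z = "xxy_word n"
  let ?f = "adyx (2 * m)"
  have "cyc_pairing ?z (delta m) = (\<Sum>k<length ?z. if ?z ! k then ?f (tl (rotate k ?z)) else 0)"
    by (simp only: delta_def cyc_pairing_tensor cyc_coeff_pmul_genX)
  also have "\<dots> = ?f (True # replicate (2 * n) False) + ?f (replicate (2 * n) False @ [True])"
  proof -
    have "(\<Sum>k<2 * n. if ?z ! Suc (Suc k) then ?f (tl (rotate (Suc (Suc k)) ?z)) else 0) = 0"
      by (rule sum.neutral) (simp add: xxy_word_def)
    moreover have "length ?z = Suc (Suc (2 * n))" by (simp add: xxy_word_def)
    ultimately show ?thesis
      by (simp only: sum.lessThan_Suc_shift) (simp add: xxy_word_def rotate1_def)
  qed
  also have "\<dots> = (if m = n then 2 else 0)"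
  proof (cases "m = n")
    case False
    have "?f w = 0" if "length w = Suc (2 * n)" for w
      using adyx_support[of "2 * m" w] False that by auto
    then show ?thesis using False by simp
  qed (simp add: adyx_first_coeff adyx_last_coeff)
  finally show ?thesis .
qed

lemma delta_independent:
  assumes "(\<lambda>p. \<Sum>n<N. c n * delta n p) \<in> Rel" "n < N"
  shows "c n = 0"
proof -
  have "0 = cyc_pairing (xxy_word n) (\<lambda>p. \<Sum>m<N. c m * delta m p)"
    using cyc_pairing_Rel[OF assms(1)] by simp
  also have "\<dots> = 2 * c n"
    using assms(2) by (simp add: cyc_pairing_sum cyc_pairing_delta if_distrib cong: if_cong)
  finally show ?thesis by simp
qed

section \<open>Components of Lie elements of low x-degree\<close>

definition xdeg_part :: "nat \<Rightarrow> ncpoly \<Rightarrow> ncpoly" where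
  "xdeg_part d f = (\<lambda>w. if xdeg w = d then f w else 0)"

lemma lin_map_xdeg_part: "lin_map (xdeg_part d)"
  by (simp add: lin_map_def xdeg_part_def fun_eq_iff)

lemma xdeg_take_drop: "xdeg (take j w) + xdeg (drop j w) = xdeg w"
  by (metis append_take_drop_id filter_append length_append xdeg_def)

lemma xdeg_part_pmul:
  "xdeg_part d (pmul a b) w = (\<Sum>i\<le>d. pmul (xdeg_part i a) (xdeg_part (d - i) b) w)"
proof -
  have split: "(\<Sum>i\<le>d. (if xdeg u = i then a u else 0) * (if xdeg v = d - i then b v else 0))
      = (if xdeg u + xdeg v = d then a u * b v else 0)" for u v
  proof -
    have "(\<Sum>i\<le>d. (if xdeg u = i then a u else 0) * (if xdeg v = d - i then b v else 0))
        = (\<Sum>i\<le>d. if i = xdeg u then (if xdeg v = d - xdeg u then a u * b v else 0) else 0)"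
      by (rule sum.cong) auto
    then show ?thesis by (auto simp: sum.delta)
  qed
  have "(\<Sum>i\<le>d. pmul (xdeg_part i a) (xdeg_part (d - i) b) w)
      = (\<Sum>j\<le>length w. \<Sum>i\<le>d. (if xdeg (take j w) = i then a (take j w) else 0)
          * (if xdeg (drop j w) = d - i then b (drop j w) else 0))"
    by (simp add: pmul_def xdeg_part_def sum.swap[of _ "{..d}"])
  also have "\<dots> = xdeg_part d (pmul a b) w"
    by (simp add: split xdeg_take_drop xdeg_part_def pmul_def)
  finally show ?thesis by simp
qed

lemma xdeg_part_brk:
  "xdeg_part d (brk a b) = (\<lambda>w. \<Sum>i\<le>d. brk (xdeg_part i a) (xdeg_part (d - i) b) w)"
proof
  fix w
  have "(\<Sum>i\<le>d. pmul (xdeg_part i b) (xdeg_part (d - i) a) w)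
      = (\<Sum>i\<le>d. pmul (xdeg_part (d - i) b) (xdeg_part i a) w)"
    by (rule sum.reindex_bij_witness[where i = "\<lambda>i. d - i" and j = "\<lambda>i. d - i"]) auto
  moreover have "xdeg_part d (brk a b) w = xdeg_part d (pmul a b) w - xdeg_part d (pmul b a) w"
    by (simp add: xdeg_part_def brk_def)
  ultimately show "xdeg_part d (brk a b) w = (\<Sum>i\<le>d. brk (xdeg_part i a) (xdeg_part (d - i) b) w)"
    by (simp add: xdeg_part_pmul brk_def sum_subtractf)
qed

definition xdeg2_gens :: "ncpoly set" where
  "xdeg2_gens = {(adY ^^ k) (brk (adyx i) (adyx j)) | k i j. True}"

lemma brk_lin_span:
  assumes "\<And>g h. g \<in> G \<Longrightarrow> h \<in> H \<Longrightarrow> brk g h \<in> lin_span K"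
    and "a \<in> lin_span G" "b \<in> lin_span H"
  shows "brk a b \<in> lin_span K"
  by (rule bilinear_lin_span[OF lin_map_brk_left lin_map_brk_right linear_subspace_lin_span assms])

lemma brk_genY_adyx: "brk genY (adyx m) \<in> lin_span (range adyx)"
  and brk_adyx_genY: "brk (adyx m) genY \<in> lin_span (range adyx)"
  and brk_genY_xdeg2_gens: "g \<in> xdeg2_gens \<Longrightarrow> brk genY g \<in> lin_span xdeg2_gens"
  and brk_xdeg2_gens_genY: "g \<in> xdeg2_gens \<Longrightarrow> brk g genY \<in> lin_span xdeg2_gens"
  and brk_adyx_adyx: "brk (adyx i) (adyx j) \<in> lin_span xdeg2_gens"
proof -
  have "brk genY (adyx m) = adyx (Suc m)" for m
    by (simp add: adY_def)
  then show gY: "brk genY (adyx m) \<in> lin_span (range adyx)" for m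
    by (metis lin_span_base rangeI)
  show "brk (adyx m) genY \<in> lin_span (range adyx)"
    using lin_span_uminus[OF gY] by (subst brk_antisym) simp
  have "brk genY g \<in> xdeg2_gens" if g: "g \<in> xdeg2_gens" for g
  proof -
    obtain k i j where "g = (adY ^^ k) (brk (adyx i) (adyx j))"
      using g by (auto simp: xdeg2_gens_def)
    then have "brk genY g = (adY ^^ Suc k) (brk (adyx i) (adyx j))"
      by (simp add: adY_def)
    then show ?thesis unfolding xdeg2_gens_def by blast
  qed
  then show gY2: "brk genY g \<in> lin_span xdeg2_gens" if "g \<in> xdeg2_gens" for g
    using that by (blast intro: lin_span_base)
  show "brk g genY \<in> lin_span xdeg2_gens" if "g \<in> xdeg2_gens"
    using lin_span_uminus[OF gY2[OF that]] by (subst brk_antisym) simp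
  have "brk (adyx i) (adyx j) \<in> xdeg2_gens"
    unfolding xdeg2_gens_def mem_Collect_eq
    by (rule exI[of _ 0], rule exI[of _ i], rule exI[of _ j]) simp
  then show "brk (adyx i) (adyx j) \<in> lin_span xdeg2_gens"
    by (rule lin_span_base)
qed

lemma lie_xdeg_parts:
  assumes "a \<in> lie"
  shows "xdeg_part 0 a \<in> lin_span {genY}"
    and "xdeg_part 1 a \<in> lin_span (range adyx)"
    and "xdeg_part 2 a \<in> lin_span xdeg2_gens"
proof -
  have "xdeg_part 0 a \<in> lin_span {genY} \<and> xdeg_part 1 a \<in> lin_span (range adyx)
      \<and> xdeg_part 2 a \<in> lin_span xdeg2_gens"
    using assms
  proof induction
    case lie_X
    have "xdeg_part 0 genX = (\<lambda>w. 0)" "xdeg_part 1 genX = adyx 0" "xdeg_part 2 genX = (\<lambda>w. 0)"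
      by (auto simp: fun_eq_iff xdeg_part_def genX_def xdeg_def)
    then show ?case using lin_span_base[OF rangeI[of adyx 0]] by (auto intro: lin_span.intros)
  next
    case lie_Y
    have "xdeg_part 0 genY = genY" "xdeg_part 1 genY = (\<lambda>w. 0)" "xdeg_part 2 genY = (\<lambda>w. 0)"
      by (auto simp: fun_eq_iff xdeg_part_def genY_def xdeg_def)
    then show ?case by (auto intro: lin_span.intros)
  next
    case (lie_add a b)
    then show ?case by (simp add: lin_map_add[OF lin_map_xdeg_part] lin_span_add)
  next
    case (lie_smult a c)
    then show ?case by (simp add: lin_map_smult[OF lin_map_xdeg_part] lin_span_smult)
  next
    case (lie_brk a b)
    then have a0: "xdeg_part 0 a \<in> lin_span {genY}" and b0: "xdeg_part 0 b \<in> lin_span {genY}"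
      and a1: "xdeg_part 1 a \<in> lin_span (range adyx)" and b1: "xdeg_part 1 b \<in> lin_span (range adyx)"
      and a2: "xdeg_part 2 a \<in> lin_span xdeg2_gens" and b2: "xdeg_part 2 b \<in> lin_span xdeg2_gens"
      by blast+
    have "brk (xdeg_part 0 a) (xdeg_part 0 b) \<in> lin_span {genY}"
      by (rule brk_lin_span[OF _ a0 b0]) (simp add: brk_self lin_span_zero)
    moreover have "brk (xdeg_part 0 a) (xdeg_part 1 b) \<in> lin_span (range adyx)"
      by (rule brk_lin_span[OF _ a0 b1]) (auto intro: brk_genY_adyx)
    moreover have "brk (xdeg_part 1 a) (xdeg_part 0 b) \<in> lin_span (range adyx)"
      by (rule brk_lin_span[OF _ a1 b0]) (auto intro: brk_adyx_genY)
    moreover have "brk (xdeg_part 0 a) (xdeg_part 2 b) \<in> lin_span xdeg2_gens"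
      by (rule brk_lin_span[OF _ a0 b2]) (auto intro: brk_genY_xdeg2_gens)
    moreover have "brk (xdeg_part 1 a) (xdeg_part 1 b) \<in> lin_span xdeg2_gens"
      by (rule brk_lin_span[OF _ a1 b1]) (auto intro: brk_adyx_adyx)
    moreover have "brk (xdeg_part 2 a) (xdeg_part 0 b) \<in> lin_span xdeg2_gens"
      by (rule brk_lin_span[OF _ a2 b0]) (auto intro: brk_xdeg2_gens_genY)
    ultimately show ?case
      by (simp add: xdeg_part_brk numeral_2_eq_2 lin_span_add)
  qed
  then show "xdeg_part 0 a \<in> lin_span {genY}" "xdeg_part 1 a \<in> lin_span (range adyx)"
    "xdeg_part 2 a \<in> lin_span xdeg2_gens" by blast+
qed

section \<open>Reduction modulo the relations\<close>

definition rel_cong :: "tens \<Rightarrow> tens \<Rightarrow> bool" where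
  "rel_cong s t \<longleftrightarrow> (\<lambda>p. s p - t p) \<in> Rel"

lemma rel_cong_refl: "rel_cong s s"
  using Rel_zero by (simp add: rel_cong_def)

lemma rel_cong_trans: "rel_cong s t \<Longrightarrow> rel_cong t u \<Longrightarrow> rel_cong s u"
  using Rel_add[of "\<lambda>p. s p - t p" "\<lambda>p. t p - u p"] by (simp add: rel_cong_def)

lemma rel_cong_smult: "rel_cong s t \<Longrightarrow> rel_cong (\<lambda>p. c * s p) (\<lambda>p. c * t p)"
  using Rel_smult[of "\<lambda>p. s p - t p" c] by (simp add: rel_cong_def right_diff_distrib)

lemma lin_map_tensor_left: "lin_map (tensor a)"
  by (simp add: lin_map_def tensor_def fun_eq_iff split_def algebra_simps)

lemma lin_map_tensor_right: "lin_map (\<lambda>a. tensor a b)"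
  by (simp add: lin_map_def tensor_def fun_eq_iff split_def algebra_simps)

lemma tensor_uminus_left: "tensor (\<lambda>w. - a w) b = (\<lambda>p. - tensor a b p)"
  by (simp add: tensor_def split_def)

lemma tensor_adyx_shift:
  "rel_cong (tensor (adyx a) (adyx (Suc b))) (\<lambda>p. - tensor (adyx (Suc a)) (adyx b) p)"
proof -
  have "brk genY (adyx b) = adyx (Suc b)"
    by (simp add: adY_def)
  moreover have "brk (adyx a) genY = (\<lambda>w. - adyx (Suc a) w)"
    by (simp add: brk_def adY_def)
  ultimately show ?thesis
    using Rel_inv[OF adyx_lie[of a] lie_Y adyx_lie[of b]]
    by (simp add: rel_cong_def tensor_uminus_left)
qed

lemma tensor_adyx_adyx:
  "rel_cong (tensor (adyx a) (adyx b)) (\<lambda>p. (-1) ^ b * tensor (adyx (a + b)) genX p)"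
proof (induction b arbitrary: a)
  case (Suc b)
  have "rel_cong (\<lambda>p. - tensor (adyx (Suc a)) (adyx b) p)
      (\<lambda>p. (-1) ^ Suc b * tensor (adyx (a + Suc b)) genX p)"
    using rel_cong_smult[OF Suc.IH[of "Suc a"], of "-1"] by simp
  with tensor_adyx_shift show ?case by (rule rel_cong_trans)
qed (simp add: rel_cong_refl)

lemma tensor_adyx_genX: "rel_cong (tensor (adyx m) genX) (tensor genX (adyx m))"
  unfolding rel_cong_def by (rule Rel_sym[OF adyx_lie[of m] lie_X])

lemma tensor_genX_adyx_odd:
  assumes "odd m"
  shows "tensor genX (adyx m) \<in> Rel"
proof -
  have "rel_cong (tensor genX (adyx m)) (\<lambda>p. - tensor (adyx m) genX p)"
    using tensor_adyx_adyx[of 0 m] assms by simp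
  moreover have "rel_cong (\<lambda>p. - tensor (adyx m) genX p) (\<lambda>p. - tensor genX (adyx m) p)"
    using rel_cong_smult[OF tensor_adyx_genX, of "-1"] by simp
  ultimately have "rel_cong (tensor genX (adyx m)) (\<lambda>p. - tensor genX (adyx m) p)"
    by (rule rel_cong_trans)
  then have "(\<lambda>p. (1 / 2) * (tensor genX (adyx m) p - - tensor genX (adyx m) p)) \<in> Rel"
    unfolding rel_cong_def by (rule Rel_smult)
  then show ?thesis by simp
qed

definition delta_reducible :: "tens set" where
  "delta_reducible = {s. \<exists>d \<in> lin_span (range delta). rel_cong s d}"

lemma linear_subspace_delta_reducible: "linear_subspace delta_reducible"
  unfolding linear_subspace_def delta_reducible_def
proof (intro conjI ballI allI; clarsimp)
  show "\<exists>d\<in>lin_span (range delta). rel_cong (\<lambda>w. 0) d"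
    using lin_span_zero rel_cong_refl by blast
next
  fix a b da db
  assume "da \<in> lin_span (range delta)" "rel_cong a da" "db \<in> lin_span (range delta)" "rel_cong b db"
  then show "\<exists>d\<in>lin_span (range delta). rel_cong (\<lambda>w. a w + b w) d"
    using Rel_add[of "\<lambda>p. a p - da p" "\<lambda>p. b p - db p"]
    by (intro bexI[of _ "\<lambda>w. da w + db w"] lin_span_add) (auto simp: rel_cong_def algebra_simps)
next
  fix c a d
  assume "d \<in> lin_span (range delta)" "rel_cong a d"
  then show "\<exists>d\<in>lin_span (range delta). rel_cong (\<lambda>w. c * a w) d"
    using rel_cong_smult lin_span_smult by blast
qed

lemma delta_reducible_rel_cong: "rel_cong s t \<Longrightarrow> t \<in> delta_reducible \<Longrightarrow> s \<in> delta_reducible"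
  by (auto simp: delta_reducible_def intro: rel_cong_trans)

lemma delta_reducible_Rel: "s \<in> Rel \<Longrightarrow> s \<in> delta_reducible"
  unfolding delta_reducible_def rel_cong_def by (auto intro!: bexI[OF _ lin_span_zero])

lemma tensor_genX_adyx_reducible: "tensor genX (adyx m) \<in> delta_reducible"
proof (cases "even m")
  case True
  then obtain n where "m = 2 * n" by blast
  then have "tensor genX (adyx m) = delta n" by (simp add: delta_def)
  then show ?thesis
    unfolding delta_reducible_def using rel_cong_refl by (blast intro: lin_span_base)
qed (simp add: tensor_genX_adyx_odd delta_reducible_Rel)

lemma tensor_adyx_adyx_reducible: "tensor (adyx i) (adyx j) \<in> delta_reducible"
proof -
  have "rel_cong (tensor (adyx i) (adyx j)) (\<lambda>p. (-1) ^ j * tensor genX (adyx (i + j)) p)"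
    using tensor_adyx_adyx rel_cong_smult[OF tensor_adyx_genX] by (rule rel_cong_trans)
  moreover have "(\<lambda>p. (-1) ^ j * tensor genX (adyx (i + j)) p) \<in> delta_reducible"
    by (rule linear_subspace_smult[OF linear_subspace_delta_reducible tensor_genX_adyx_reducible])
  ultimately show ?thesis by (rule delta_reducible_rel_cong)
qed

lemma xdeg2_gens_lie: "g \<in> xdeg2_gens \<Longrightarrow> g \<in> lie"
  by (auto simp: xdeg2_gens_def intro: adY_pow_lie lie_brk adyx_lie)

lemma tensor_genY_xdeg2_gens_reducible:
  assumes "g \<in> xdeg2_gens"
  shows "tensor genY g \<in> delta_reducible"
proof -
  obtain k i j where g: "g = (adY ^^ k) (brk (adyx i) (adyx j))"
    using assms by (auto simp: xdeg2_gens_def)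
  show ?thesis
  proof (cases k)
    case 0
    have "rel_cong (tensor genY (brk (adyx i) (adyx j))) (tensor (brk genY (adyx i)) (adyx j))"
      unfolding rel_cong_def by (rule Rel_inv[OF lie_Y adyx_lie[of i] adyx_lie[of j]])
    then have "rel_cong (tensor genY g) (tensor (adyx (Suc i)) (adyx j))"
      using 0 g by (simp add: adY_def)
    then show ?thesis
      using tensor_adyx_adyx_reducible by (rule delta_reducible_rel_cong)
  next
    case (Suc k')
    let ?r = "(adY ^^ k') (brk (adyx i) (adyx j))"
    have "?r \<in> lie" by (intro adY_pow_lie lie_brk adyx_lie)
    from Rel_inv[OF lie_Y lie_Y this]
    have "tensor genY (brk genY ?r) \<in> Rel"
      by (simp add: brk_self tensor_def)
    then show ?thesis
      using Suc g by (simp add: adY_def delta_reducible_Rel)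
  qed
qed

lemma tensor_xdeg2_gens_genY_reducible:
  assumes "g \<in> xdeg2_gens"
  shows "tensor g genY \<in> delta_reducible"
proof -
  have "rel_cong (tensor g genY) (tensor genY g)"
    unfolding rel_cong_def by (rule Rel_sym[OF xdeg2_gens_lie[OF assms] lie_Y])
  then show ?thesis
    using tensor_genY_xdeg2_gens_reducible[OF assms] by (rule delta_reducible_rel_cong)
qed

lemma tensor_lin_span_reducible:
  assumes "\<And>g h. g \<in> G \<Longrightarrow> h \<in> H \<Longrightarrow> tensor g h \<in> delta_reducible"
    and "a \<in> lin_span G" "b \<in> lin_span H"
  shows "tensor a b \<in> delta_reducible"
  by (rule bilinear_lin_span[OF lin_map_tensor_left lin_map_tensor_right
        linear_subspace_delta_reducible assms])

definition xdeg2_part :: "tens \<Rightarrow> tens" where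
  "xdeg2_part t = (\<lambda>(u, v). if xdeg u + xdeg v = 2 then t (u, v) else 0)"

lemma xdeg2_part_tensor:
  "xdeg2_part (tensor a b) = (\<lambda>p. tensor (xdeg_part 0 a) (xdeg_part 2 b) p
     + tensor (xdeg_part 1 a) (xdeg_part 1 b) p + tensor (xdeg_part 2 a) (xdeg_part 0 b) p)"
  by (auto simp: fun_eq_iff xdeg2_part_def tensor_def xdeg_part_def)

lemma xdeg2_part_LL_reducible: "s \<in> LL \<Longrightarrow> xdeg2_part s \<in> delta_reducible"
proof (induction rule: LL.induct)
  case LL_zero
  then show ?case
    using linear_subspace_zero[OF linear_subspace_delta_reducible]
    by (simp add: xdeg2_part_def case_prod_beta)
next
  case (LL_tensor a b)
  note a = lie_xdeg_parts[OF LL_tensor(1)] and b = lie_xdeg_parts[OF LL_tensor(2)]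
  have "tensor (xdeg_part 0 a) (xdeg_part 2 b) \<in> delta_reducible"
    by (rule tensor_lin_span_reducible[OF _ a(1) b(3)]) (simp add: tensor_genY_xdeg2_gens_reducible)
  moreover have "tensor (xdeg_part 1 a) (xdeg_part 1 b) \<in> delta_reducible"
    by (rule tensor_lin_span_reducible[OF _ a(2) b(2)]) (auto simp: tensor_adyx_adyx_reducible)
  moreover have "tensor (xdeg_part 2 a) (xdeg_part 0 b) \<in> delta_reducible"
    by (rule tensor_lin_span_reducible[OF _ a(3) b(1)]) (simp add: tensor_xdeg2_gens_genY_reducible)
  ultimately show ?case
    unfolding xdeg2_part_tensor
    by (intro linear_subspace_add[OF linear_subspace_delta_reducible])
next
  case (LL_add s t)
  have "xdeg2_part (\<lambda>p. s p + t p) = (\<lambda>p. xdeg2_part s p + xdeg2_part t p)"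
    by (auto simp: xdeg2_part_def fun_eq_iff)
  with LL_add.IH show ?case
    by (simp add: linear_subspace_add[OF linear_subspace_delta_reducible])
next
  case (LL_smult s c)
  have "xdeg2_part (\<lambda>p. c * s p) = (\<lambda>p. c * xdeg2_part s p)"
    by (auto simp: xdeg2_part_def fun_eq_iff)
  with LL_smult.IH show ?case
    by (simp add: linear_subspace_smult[OF linear_subspace_delta_reducible])
qed

lemma LL_xdeg2_reducible:
  assumes "t \<in> LL_xdeg2"
  shows "t \<in> delta_reducible"
proof -
  have "t \<in> LL" using assms by (simp add: LL_xdeg2_def)
  then have "xdeg2_part t \<in> delta_reducible" by (rule xdeg2_part_LL_reducible)
  moreover have "xdeg2_part t = t"
    using assms by (auto simp: LL_xdeg2_def xdeg2_part_def fun_eq_iff)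
  ultimately show ?thesis by simp
qed

lemma delta_LL_xdeg2: "delta n \<in> LL_xdeg2"
proof -
  have "xdeg u + xdeg v = 2" if "delta n (u, v) \<noteq> 0" for u v
  proof -
    have "genX u \<noteq> 0" "adyx (2 * n) v \<noteq> 0"
      using that by (auto simp: delta_def tensor_def)
    then have "u = [True]" "xdeg v = 1"
      using adyx_support[of "2 * n" v] by (auto simp: genX_def split: if_splits)
    then show ?thesis by (simp add: xdeg_def)
  qed
  moreover have "delta n \<in> LL"
    unfolding delta_def by (rule LL_tensor[OF lie_X adyx_lie])
  ultimately show ?thesis by (simp add: LL_xdeg2_def)
qed

theorem mainTheorem6:
  shows "(\<forall>n. delta n \<in> LL_xdeg2)
    \<and> (\<forall>(N::nat) (c::nat \<Rightarrow> real).
          (\<lambda>p. \<Sum>n<N. c n * delta n p) \<in> Rel \<longrightarrow> (\<forall>n<N. c n = 0))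
    \<and> (\<forall>t \<in> LL_xdeg2. \<exists>(N::nat) (c::nat \<Rightarrow> real).
          (\<lambda>p. t p - (\<Sum>n<N. c n * delta n p)) \<in> Rel)"
proof (intro conjI allI impI ballI)
  fix n
  show "delta n \<in> LL_xdeg2" by (rule delta_LL_xdeg2)
next
  fix N n and c :: "nat \<Rightarrow> real"
  assume "(\<lambda>p. \<Sum>n<N. c n * delta n p) \<in> Rel" "n < N"
  then show "c n = 0" by (rule delta_independent)
next
  fix t
  assume "t \<in> LL_xdeg2"
  then obtain d where "d \<in> lin_span (range delta)" "rel_cong t d"
    using LL_xdeg2_reducible by (auto simp: delta_reducible_def)
  moreover obtain N c where "d = (\<lambda>p. \<Sum>n<N. c n * delta n p)"
    using lin_span_range_sum[OF calculation(1)] by blast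
  ultimately show "\<exists>N c. (\<lambda>p. t p - (\<Sum>n<N. c n * delta n p)) \<in> Rel"
    by (auto simp: rel_cong_def)
qed

end
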